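(* Every word $W$ in the letters $\sigma_i,\sigma_i^{-1},x_i$ ($1\le i\le n-1$) is equal in $SB_n$ to $\Delta^m\overline{A}$ for some integer $m$ and some positive word $\overline{A}$ which is prime to $\Delta$ and is its own base; moreover this expression is unique: if $\Delta^m\overline{A}=\Delta^p\overline{C}$ in $SB_n$ with $m,p\in\mathbb Z$ and $\overline{A},\overline{C}$ positive words prime to $\Delta$ each equal to its own base, then $m=p$ and $\overline{A}\equiv\overline{C}$ (identical words).
   Context: Fix $n\ge 2$. The singular braid monoid $SB_n$ is the monoid with generators $\sigma_i,\sigma_i^{-1},x_i$ ($i=1,\dots,n-1$) and relations: $\sigma_i\sigma_j=\sigma_j\sigma_i$ and $x_ix_j=x_jx_i$ if $|i-j|>1$; $x_i\sigma_j=\sigma_jx_i$ if $|i-j|\ne1$; $\sigma_i\sigma_{i+1}\sigma_i=\sigma_{i+1}\sigma_i\sigma_{i+1}$; $\sigma_i\sigma_{i+1}x_i=x_{i+1}\sigma_i\sigma_{i+1}$; $\sigma_{i+1}\sigma_ix_{i+1}=x_i\sigma_{i+1}\sigma_i$; $\sigma_i\sigma_i^{-1}=\sigma_i^{-1}\sigma_i=1$. The positive singular braid monoid $SB_n^+$ has generators $\sigma_i,x_i$ and all these relations except the last. Positive words are words in $\sigma_i,x_i$; $A\doteq B$ means equality in $SB_n^+$; $\equiv$ means identity of words. $\Delta\equiv\sigma_1\cdots\sigma_{n-1}\,\sigma_1\cdots\sigma_{n-2}\cdots\sigma_1\sigma_2\,\sigma_1$. A positive word $A$ is prime to $\Delta$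 if there is no positive word $Z$ with $A\doteq\Delta Z$. Order positive words lexicographically with $\sigma_1<\sigma_2<\cdots<\sigma_{n-1}<x_1<\cdots<x_{n-1}$; the base of a positive word $W$ is the smallest (in this order) positive word positively equal to $W$ (positively equal words have equal length, so this is well defined). The form $\Delta^m\overline{A}$ is called the Garside left normal form of $W$, and $m$ its power. *)

theory Defs
  imports Main
begin

text \<open>Letters: Sig i = sigma_i, SigInv i = sigma_i inverse, X i = x_i (indices 1..n-1).
  Words are lists of letters.\<close>

datatype letter = Sig nat | SigInv nat | X nat

type_synonym word = "letter list"

definition idx_ok :: "nat \<Rightarrow> nat \<Rightarrow> bool" where
  "idx_ok n i \<longleftrightarrow> 1 \<le> i \<and> i \<le> n - 1"

fun letter_idx :: "letter \<Rightarrow> nat" where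
  "letter_idx (Sig i) = i" | "letter_idx (SigInv i) = i" | "letter_idx (X i) = i"

fun is_pos_letter :: "letter \<Rightarrow> bool" where
  "is_pos_letter (Sig i) = True" | "is_pos_letter (SigInv i) = False" | "is_pos_letter (X i) = True"

definition sb_word :: "nat \<Rightarrow> word \<Rightarrow> bool" where
  "sb_word n w \<longleftrightarrow> (\<forall>a\<in>set w. idx_ok n (letter_idx a))"

definition pos_word :: "nat \<Rightarrow> word \<Rightarrow> bool" where
  "pos_word n w \<longleftrightarrow> (\<forall>a\<in>set w. is_pos_letter a \<and> idx_ok n (letter_idx a))"

definition pos_rels :: "nat \<Rightarrow> (word \<times> word) set" where
  "pos_rels n =
     {([Sig i, Sig j], [Sig j, Sig i]) | i j. idx_ok n i \<and> idx_ok n j \<and> (i + 1 < j \<or> j + 1 < i)}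
   \<union> {([X i, X j], [X j, X i]) | i j. idx_ok n i \<and> idx_ok n j \<and> (i + 1 < j \<or> j + 1 < i)}
   \<union> {([X i, Sig j], [Sig j, X i]) | i j. idx_ok n i \<and> idx_ok n j \<and> i \<noteq> j + 1 \<and> j \<noteq> i + 1}
   \<union> {([Sig i, Sig (i+1), Sig i], [Sig (i+1), Sig i, Sig (i+1)]) | i. idx_ok n i \<and> idx_ok n (i+1)}
   \<union> {([Sig i, Sig (i+1), X i], [X (i+1), Sig i, Sig (i+1)]) | i. idx_ok n i \<and> idx_ok n (i+1)}
   \<union> {([Sig (i+1), Sig i, X (i+1)], [X i, Sig (i+1), Sig i]) | i. idx_ok n i \<and> idx_ok n (i+1)}"

definition sb_rels :: "nat \<Rightarrow> (word \<times> word) set" where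
  "sb_rels n = pos_rels n
     \<union> {([Sig i, SigInv i], []) | i. idx_ok n i}
     \<union> {([SigInv i, Sig i], []) | i. idx_ok n i}"

inductive cong_gen :: "(word \<times> word) set \<Rightarrow> word \<Rightarrow> word \<Rightarrow> bool" for R where
  refl: "cong_gen R u u"
| sym: "cong_gen R u v \<Longrightarrow> cong_gen R v u"
| trans: "cong_gen R u v \<Longrightarrow> cong_gen R v w \<Longrightarrow> cong_gen R u w"
| rel: "(l, r) \<in> R \<Longrightarrow> cong_gen R (a @ l @ b) (a @ r @ b)"

definition pos_eq :: "nat \<Rightarrow> word \<Rightarrow> word \<Rightarrow> bool" where
  "pos_eq n = cong_gen (pos_rels n)"

definition sb_eq :: "nat \<Rightarrow> word \<Rightarrow> word \<Rightarrow> bool" where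
  "sb_eq n = cong_gen (sb_rels n)"

text \<open>Delta = sigma_1..sigma_{n-1} sigma_1..sigma_{n-2} ... sigma_1 sigma_2 sigma_1.\<close>
definition delta :: "nat \<Rightarrow> word" where
  "delta n = concat (map (\<lambda>k. map Sig [1..<k+1]) (rev [1..<n]))"

fun inv_letter :: "letter \<Rightarrow> letter" where
  "inv_letter (Sig i) = SigInv i" | "inv_letter (SigInv i) = Sig i" | "inv_letter (X i) = X i"

definition inv_word :: "word \<Rightarrow> word" where
  "inv_word w = rev (map inv_letter w)"

definition delta_pow :: "nat \<Rightarrow> int \<Rightarrow> word" where
  "delta_pow n m = (if 0 \<le> m then concat (replicate (nat m) (delta n))
                    else concat (replicate (nat (- m)) (inv_word (delta n))))"

definition prime_to_delta :: "nat \<Rightarrow> word \<Rightarrow> bool" where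
  "prime_to_delta n A \<longleftrightarrow> \<not> (\<exists>Z. pos_word n Z \<and> pos_eq n A (delta n @ Z))"

text \<open>Letter order sigma_1 < ... < sigma_{n-1} < x_1 < ... < x_{n-1} via ranks.\<close>
fun rank :: "nat \<Rightarrow> letter \<Rightarrow> nat" where
  "rank n (Sig i) = i" | "rank n (X i) = n + i" | "rank n (SigInv i) = 0"

definition word_less :: "nat \<Rightarrow> word \<Rightarrow> word \<Rightarrow> bool" where
  "word_less n u v \<longleftrightarrow> (map (rank n) u, map (rank n) v) \<in> lexord {(a, b). a < b}"

text \<open>The base of a positive word W is the lexicographically smallest positive word
  positively equal to W; A is its own base iff it is that smallest word.\<close>
definition own_base :: "nat \<Rightarrow> word \<Rightarrow> bool" where
  "own_base n A \<longleftrightarrow> (\<forall>B. pos_word n B \<and> pos_eq n A B \<longrightarrow> A = B \<or> word_less n A B)"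

end

(* Positive equality in SB_n^+ is cancellative.  Given a common multiple d U = e V of two
   letters, Dehornoy's word reversing through the complement of d and e, together with the
   cube condition (checked by computation on all triples of letters), shows that U and V
   factor as U = P Z, V = Q Z through the least common multiple d P = e Q; right cancellation
   follows by reversing words.  The word Delta is a common right multiple of all sigma_i, and
   conjugation by Delta is the flip i -> n - i of indices.  Hence every word W equals
   Delta^-k P with P positive, where (k, P) is computed letter by letter, and this fraction,
   taken modulo Delta^(N-k) P = Delta^(N-l) Q in SB_n^+, is an invariant of W in SB_n.  So
   Delta^m A = Delta^p C in SB_n yields Delta^s A = Delta^t C in SB_n^+ with s - t = m - p;
   cancelling the smaller power of Delta and using that A and C are prime to Delta gives
   s = t and A = C in SB_n^+, and words that are their own base are then identical.  For
   existence, split off the largest power of Delta from P and pass to the base. *)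

theory Submission
  imports Defs "HOL-Library.List_Lexorder"
begin

section \<open>Congruences generated by relations\<close>

lemma cong_gen_of_rel: "(l, r) \<in> R \<Longrightarrow> cong_gen R l r"
  using cong_gen.rel[of l r R "[]" "[]"] by simp

lemma cong_gen_append: "cong_gen R u v \<Longrightarrow> cong_gen R (w @ u @ z) (w @ v @ z)"
proof (induction rule: cong_gen.induct)
  case (rel l r a b)
  then show ?case using cong_gen.rel[of l r R "w @ a" "b @ z"] by simp
qed (blast intro: cong_gen.intros)+

lemma cong_gen_mono: "cong_gen R u v \<Longrightarrow> R \<subseteq> S \<Longrightarrow> cong_gen S u v"
  by (induction rule: cong_gen.induct) (auto intro: cong_gen.intros)

lemma cong_gen_length:
  assumes "\<And>l r. (l, r) \<in> R \<Longrightarrow> length l = length r"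
  shows "cong_gen R u v \<Longrightarrow> length u = length v"
  by (induction rule: cong_gen.induct) (auto dest: assms)

lemma cong_gen_letterwise:
  assumes "\<And>l r. (l, r) \<in> R \<Longrightarrow> (\<forall>a\<in>set l. P a) = (\<forall>a\<in>set r. P a)"
  shows "cong_gen R u v \<Longrightarrow> (\<forall>a\<in>set u. P a) = (\<forall>a\<in>set v. P a)"
  by (induction rule: cong_gen.induct) (auto dest: assms)

lemma cong_gen_map:
  assumes "cong_gen R u v" "\<forall>a\<in>set u. P a"
    and inv: "\<And>l r. (l, r) \<in> R \<Longrightarrow> (\<forall>a\<in>set l. P a) = (\<forall>a\<in>set r. P a)"
    and rel: "\<And>l r. (l, r) \<in> R \<Longrightarrow> \<forall>a\<in>set l. P a \<Longrightarrow> cong_gen R (map f l) (map f r)"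
  shows "cong_gen R (map f u) (map f v)"
  using assms(1,2)
proof (induction rule: cong_gen.induct)
  case (sym u v)
  then show ?case using cong_gen_letterwise[OF inv sym.hyps] by (blast intro: cong_gen.sym)
next
  case (trans u v w)
  then show ?case using cong_gen_letterwise[OF inv trans.hyps(1)] by (blast intro: cong_gen.trans)
next
  case (rel l r a b)
  then show ?case using cong_gen_append[OF assms(4)] by simp
qed (rule cong_gen.refl)

lemma cong_gen_rev:
  assumes "\<And>l r. (l, r) \<in> R \<Longrightarrow> cong_gen R (rev l) (rev r)"
  shows "cong_gen R u v \<Longrightarrow> cong_gen R (rev u) (rev v)"
proof (induction rule: cong_gen.induct)
  case (rel l r a b)
  then show ?case using cong_gen_append[OF assms, of l r "rev b" "rev a"] by simp
qed (blast intro: cong_gen.intros)+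

lemma pos_eq_refl [simp]: "pos_eq n u u"
  unfolding pos_eq_def by (rule cong_gen.refl)

lemma pos_eq_sym: "pos_eq n u v \<Longrightarrow> pos_eq n v u"
  unfolding pos_eq_def by (rule cong_gen.sym)

lemma pos_eq_trans [trans]: "pos_eq n u v \<Longrightarrow> pos_eq n v w \<Longrightarrow> pos_eq n u w"
  unfolding pos_eq_def by (rule cong_gen.trans)

lemma pos_eq_append: "pos_eq n u v \<Longrightarrow> pos_eq n (w @ u @ z) (w @ v @ z)"
  unfolding pos_eq_def by (rule cong_gen_append)

lemma pos_eq_appendL: "pos_eq n u v \<Longrightarrow> pos_eq n (w @ u) (w @ v)"
  using pos_eq_append[of n u v w "[]"] by simp

lemma pos_eq_appendR: "pos_eq n u v \<Longrightarrow> pos_eq n (u @ z) (v @ z)"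
  using pos_eq_append[of n u v "[]" z] by simp

lemma pos_eq_Cons: "pos_eq n u v \<Longrightarrow> pos_eq n (a # u) (a # v)"
  using pos_eq_appendL[of n u v "[a]"] by simp

lemma pos_eq_append_both: "pos_eq n u v \<Longrightarrow> pos_eq n u' v' \<Longrightarrow> pos_eq n (u @ u') (v @ v')"
  by (meson pos_eq_appendL pos_eq_appendR pos_eq_trans)

lemma pos_eq_rel: "(l, r) \<in> pos_rels n \<or> (r, l) \<in> pos_rels n \<Longrightarrow> pos_eq n l r"
  unfolding pos_eq_def by (metis cong_gen_of_rel cong_gen.sym)

lemma pos_word_simps [simp]:
  "pos_word n []"
  "pos_word n (a # u) \<longleftrightarrow> is_pos_letter a \<and> idx_ok n (letter_idx a) \<and> pos_word n u"
  "pos_word n (u @ v) \<longleftrightarrow> pos_word n u \<and> pos_word n v"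
  unfolding pos_word_def by auto

lemma pos_eq_length: "pos_eq n u v \<Longrightarrow> length u = length v"
  unfolding pos_eq_def by (rule cong_gen_length) (auto simp: pos_rels_def)

lemma pos_eq_pos_word: "pos_eq n u v \<Longrightarrow> pos_word n u \<longleftrightarrow> pos_word n v"
  unfolding pos_eq_def pos_word_def by (rule cong_gen_letterwise) (auto simp: pos_rels_def)

lemma pos_eq_rev: "pos_eq n u v \<Longrightarrow> pos_eq n (rev u) (rev v)"
  unfolding pos_eq_def
proof (rule cong_gen_rev)
  fix l r assume "(l, r) \<in> pos_rels n"
  then have "(rev l, rev r) \<in> pos_rels n \<or> (rev r, rev l) \<in> pos_rels n"
    unfolding pos_rels_def by auto
  then show "cong_gen (pos_rels n) (rev l) (rev r)"
    using pos_eq_rel[unfolded pos_eq_def] by blast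
qed

section \<open>Left and right cancellation in the positive monoid\<close>

definition adj :: "nat \<Rightarrow> nat \<Rightarrow> bool" where
  "adj i j \<longleftrightarrow> i + 1 = j \<or> j + 1 = i"

lemma adj_sym: "adj i j = adj j i"
  unfolding adj_def by auto

text \<open>The complement of two letters in the sense of Dehornoy's word reversing:
  \<open>complement d e = Some (P, Q)\<close> gives the least common right multiple \<open>d P = e Q\<close>,
  and \<open>None\<close> means that \<open>d\<close> and \<open>e\<close> have no common right multiple.\<close>
fun complement :: "letter \<Rightarrow> letter \<Rightarrow> (word \<times> word) option" where
  "complement (Sig i) (Sig j) =
     (if i = j then Some ([], []) else if adj i j then Some ([Sig j, Sig i], [Sig i, Sig j])
      else Some ([Sig j], [Sig i]))"
| "complement (X i) (X j) =
     (if i = j then Some ([], []) else if adj i j then None else Some ([X j], [X i]))"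
| "complement (Sig i) (X j) =
     (if adj i j then Some ([Sig j, X i], [Sig i, Sig j]) else Some ([X j], [Sig i]))"
| "complement (X i) (Sig j) =
     (if adj j i then Some ([Sig j, Sig i], [Sig i, X j]) else Some ([Sig j], [X i]))"
| "complement _ _ = None"

lemma complement_self: "is_pos_letter d \<Longrightarrow> complement d d = Some ([], [])"
  by (cases d) auto

lemma complement_swap: "complement d e = Some (P, Q) \<Longrightarrow> complement e d = Some (Q, P)"
  by (cases d; cases e) (auto simp: adj_def split: if_splits)

lemma complement_pos_word:
  "pos_word n [d] \<Longrightarrow> pos_word n [e] \<Longrightarrow> complement d e = Some (P, Q) \<Longrightarrow> pos_word n P \<and> pos_word n Q"
  by (cases d; cases e) (auto split: if_splits)

lemma complement_pos_eq:
  "pos_word n [d] \<Longrightarrow> pos_word n [e] \<Longrightarrow> complement d e = Some (P, Q) \<Longrightarrow> pos_eq n (d # P) (e # Q)"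
  by (cases d; cases e) (auto simp: adj_def pos_rels_def split: if_splits intro!: pos_eq_rel)

lemma complement_of_rel:
  "(l, r) \<in> pos_rels n \<Longrightarrow> \<exists>d e l' r'. l = d # l' \<and> r = e # r' \<and> complement d e = Some (l', r')"
  unfolding pos_rels_def by (auto simp: adj_def)

definition pos_letter :: "bool \<Rightarrow> nat \<Rightarrow> letter" where
  "pos_letter b j = (if b then Sig j else X j)"

lemma pos_letter_cases: "is_pos_letter a \<Longrightarrow> \<exists>b. a = pos_letter b (letter_idx a)"
  by (cases a) (auto simp: pos_letter_def)

lemma pos_letter_simps [simp]: "is_pos_letter (pos_letter b j)" "letter_idx (pos_letter b j) = j"
  by (auto simp: pos_letter_def)

datatype reversal = Common word word | Clash | Out_of_fuel

text \<open>Right reversing with fuel \<open>k\<close>: \<open>reversing k U V = Common A B\<close> means \<open>U A = V B\<close>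
  is the common right multiple of \<open>U\<close> and \<open>V\<close> built letter by letter from the complement.\<close>
fun reversing :: "nat \<Rightarrow> word \<Rightarrow> word \<Rightarrow> reversal" where
  "reversing 0 U V = Out_of_fuel"
| "reversing (Suc k) [] V = Common V []"
| "reversing (Suc k) (d # U) [] = Common [] (d # U)"
| "reversing (Suc k) (d # U) (e # V) =
     (case complement d e of
        None \<Rightarrow> Clash
      | Some (P, Q) \<Rightarrow>
          (case reversing k U P of
             Common A1 B1 \<Rightarrow>
               (case reversing k (Q @ B1) V of Common A2 B2 \<Rightarrow> Common (A1 @ A2) B2 | r \<Rightarrow> r)
           | r \<Rightarrow> r))"

lemma reversing_sound:
  "reversing k U V = Common A B \<Longrightarrow> pos_word n U \<Longrightarrow> pos_word n V \<Longrightarrow>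
     pos_eq n (U @ A) (V @ B) \<and> pos_word n A \<and> pos_word n B"
proof (induction k U V arbitrary: A B rule: reversing.induct)
  case (4 k d U e V)
  obtain P Q A1 B1 A2 where c: "complement d e = Some (P, Q)"
    and r1: "reversing k U P = Common A1 B1" and r2: "reversing k (Q @ B1) V = Common A2 B"
    and AB: "A = A1 @ A2"
    using "4.prems"(1) by (auto split: option.splits reversal.splits)
  have pd: "pos_word n [d]" "pos_word n [e]" using "4.prems" by auto
  have PQ: "pos_word n P" "pos_word n Q" using complement_pos_word[OF pd c] by auto
  have i1: "pos_eq n (U @ A1) (P @ B1)" "pos_word n A1" "pos_word n B1"
    using "4.IH"(1)[OF c HOL.refl r1] "4.prems" PQ by auto
  have i2: "pos_eq n (Q @ B1 @ A2) (V @ B)" "pos_word n A2" "pos_word n B"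
    using "4.IH"(2)[OF c HOL.refl r1 r2] "4.prems" PQ i1 by auto
  have "pos_eq n (d # U @ A1 @ A2) (d # P @ B1 @ A2)"
    using pos_eq_Cons[OF pos_eq_appendR[OF i1(1), of A2]] by simp
  also have "pos_eq n (d # P @ B1 @ A2) (e # Q @ B1 @ A2)"
    using pos_eq_appendR[OF complement_pos_eq[OF pd c], of "B1 @ A2"] by simp
  also have "pos_eq n (e # Q @ B1 @ A2) (e # V @ B)"
    using pos_eq_Cons[OF i2(1)] .
  finally show ?case using AB i1 i2 by simp
qed auto

definition complement_factors :: "nat \<Rightarrow> word \<Rightarrow> word \<Rightarrow> bool" where
  "complement_factors n u v \<longleftrightarrow>
     (\<exists>d U e V P Q Z. u = d # U \<and> v = e # V \<and> complement d e = Some (P, Q)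
        \<and> pos_eq n U (P @ Z) \<and> pos_eq n V (Q @ Z))"

definition complement_complete :: "nat \<Rightarrow> nat \<Rightarrow> bool" where
  "complement_complete n l \<longleftrightarrow>
     (\<forall>u v. pos_word n u \<longrightarrow> length u = Suc l \<longrightarrow> pos_eq n u v \<longrightarrow> complement_factors n u v)"

lemma complement_completeD:
  assumes "complement_complete n (length U)" "pos_word n (d # U)" "pos_eq n (d # U) (e # V)"
  obtains P Q Z where "complement d e = Some (P, Q)" "pos_eq n U (P @ Z)" "pos_eq n V (Q @ Z)"
  using assms unfolding complement_complete_def complement_factors_def by fastforce

lemma reversing_complete:
  assumes complete: "\<And>l. l < L \<Longrightarrow> complement_complete n l"
  shows "reversing k U V \<noteq> Out_of_fuel \<Longrightarrow> pos_word n (U @ Z1) \<Longrightarrow> pos_word n (V @ Z2) \<Longrightarrow>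
     pos_eq n (U @ Z1) (V @ Z2) \<Longrightarrow> length (U @ Z1) \<le> L \<Longrightarrow>
     \<exists>A B Z. reversing k U V = Common A B \<and> pos_eq n Z1 (A @ Z) \<and> pos_eq n Z2 (B @ Z) \<and> pos_word n Z"
proof (induction k U V arbitrary: Z1 Z2 rule: reversing.induct)
  case (2 k V)
  then show ?case by auto
next
  case (3 k d U)
  then show ?case by (intro exI[of _ "[]"] exI[of _ "d # U"] exI[of _ Z1]) (auto intro: pos_eq_sym)
next
  case (4 k d U e V)
  obtain P Q Z3 where c: "complement d e = Some (P, Q)" and e1: "pos_eq n (U @ Z1) (P @ Z3)"
    and e2: "pos_eq n (V @ Z2) (Q @ Z3)"
    using complement_completeD[of n "U @ Z1" d e "V @ Z2"] complete "4.prems" by auto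
  have pd: "pos_word n [d]" "pos_word n [e]" using "4.prems" by auto
  have PQ: "pos_word n P" "pos_word n Q" using complement_pos_word[OF pd c] by auto
  have pZ3: "pos_word n Z3" using pos_eq_pos_word[OF e1] "4.prems" by auto
  have fuel1: "reversing k U P \<noteq> Out_of_fuel" using "4.prems"(1) c by (auto split: reversal.splits)
  obtain A1 B1 Z4 where r1: "reversing k U P = Common A1 B1" and f1: "pos_eq n Z1 (A1 @ Z4)"
    and f2: "pos_eq n Z3 (B1 @ Z4)" and pZ4: "pos_word n Z4"
    using "4.IH"(1)[OF c HOL.refl fuel1, of Z1 Z3] "4.prems" e1 PQ pZ3 by auto
  have pB1: "pos_word n B1" using pos_eq_pos_word[OF f2] pZ3 by simp
  have fuel2: "reversing k (Q @ B1) V \<noteq> Out_of_fuel" using "4.prems"(1) c r1 by auto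
  have e3: "pos_eq n ((Q @ B1) @ Z4) (V @ Z2)"
    using pos_eq_appendL[OF f2, of Q] e2 by (metis append_assoc pos_eq_sym pos_eq_trans)
  have l3: "length ((Q @ B1) @ Z4) \<le> L"
    using pos_eq_length[OF e3] pos_eq_length[OF "4.prems"(4)] "4.prems"(5) by simp
  obtain A2 B2 Z where r2: "reversing k (Q @ B1) V = Common A2 B2" and g1: "pos_eq n Z4 (A2 @ Z)"
    and g2: "pos_eq n Z2 (B2 @ Z)" and pZ: "pos_word n Z"
    using "4.IH"(2)[OF c HOL.refl r1 fuel2 _ _ e3 l3] "4.prems" PQ pB1 pZ4 by auto
  have "pos_eq n Z1 ((A1 @ A2) @ Z)" using f1 pos_eq_appendL[OF g1, of A1] by (metis append_assoc pos_eq_trans)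
  then show ?case using r1 r2 c g2 pZ by auto
qed auto

text \<open>Dehornoy's cube condition for the complement on letters.  All reversings that occur
  have at most six steps, and the condition is verified by exhaustive computation.\<close>
definition cube_condition :: "letter \<Rightarrow> letter \<Rightarrow> letter \<Rightarrow> bool" where
  "cube_condition d e g =
     (case complement d e of None \<Rightarrow> True | Some (P1, Q1) \<Rightarrow>
       (case complement e g of None \<Rightarrow> True | Some (P2, Q2) \<Rightarrow>
         (case reversing 6 Q1 P2 of Clash \<Rightarrow> True | Out_of_fuel \<Rightarrow> False | Common A B \<Rightarrow>
           (case complement d g of None \<Rightarrow> False | Some (P3, Q3) \<Rightarrow>
             (case reversing 6 P3 (P1 @ A) of
                Common T B' \<Rightarrow> B' = [] \<and> reversing 6 (Q3 @ T) (Q2 @ B) = Common [] []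
              | _ \<Rightarrow> False)))))"

lemma cube_condition_pos_letters: "cube_condition (pos_letter b i) (pos_letter c j) (pos_letter b' k)"
  by (cases b; cases c; cases b'; cases "i = j"; cases "j = k"; cases "i = k";
      cases "adj i j"; cases "adj j k"; cases "adj i k";
      simp add: cube_condition_def pos_letter_def adj_sym numeral_eq_Suc; auto simp: adj_def)

lemma cube_condition_holds: "cube_condition d e g"
proof (cases "is_pos_letter d \<and> is_pos_letter e \<and> is_pos_letter g")
  case True
  then show ?thesis using cube_condition_pos_letters pos_letter_cases by metis
next
  case False
  then show ?thesis
    by (cases d; cases e; cases g) (auto simp: cube_condition_def split: option.splits reversal.splits)
qed

lemma complement_factorsI:
  "complement d e = Some (P, Q) \<Longrightarrow> pos_eq n U (P @ Z) \<Longrightarrow> pos_eq n V (Q @ Z) \<Longrightarrow>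
     complement_factors n (d # U) (e # V)"
  unfolding complement_factors_def by blast

lemma complement_factors_refl: "pos_word n (d # U) \<Longrightarrow> complement_factors n (d # U) (d # U)"
  by (rule complement_factorsI[of d d "[]" "[]" n U U U]) (simp_all add: complement_self)

lemma complement_factors_sym: "complement_factors n u v \<Longrightarrow> complement_factors n v u"
  unfolding complement_factors_def by (blast dest: complement_swap)

lemma complement_factors_rel:
  assumes "(l, r) \<in> pos_rels n" "pos_word n (a @ l @ b)"
  shows "complement_factors n (a @ l @ b) (a @ r @ b)"
proof (cases a)
  case Nil
  obtain d e l' r' where "l = d # l'" "r = e # r'" "complement d e = Some (l', r')"
    using complement_of_rel[OF assms(1)] by blast
  then show ?thesis using Nil complement_factorsI[of d e l' r' n "l' @ b" b "r' @ b"] by simp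
next
  case (Cons c a')
  have "pos_eq n (a' @ l @ b) (a' @ r @ b)" using pos_eq_append[OF pos_eq_rel] assms(1) by blast
  then show ?thesis
    using Cons assms(2) complement_factorsI[of c c "[]" "[]" n "a' @ l @ b" "a' @ r @ b" "a' @ r @ b"]
    by (simp add: complement_self)
qed

lemma cube_condition_common_multiple:
  assumes pd: "pos_word n [d]" "pos_word n [e]" "pos_word n [g]"
    and c1: "complement d e = Some (P1, Q1)" and c2: "complement e g = Some (P2, Q2)"
    and r: "reversing 6 Q1 P2 = Common A B" and pAB: "pos_word n A" "pos_word n B"
  obtains P3 Q3 T where "complement d g = Some (P3, Q3)"
    "pos_eq n (P1 @ A) (P3 @ T)" "pos_eq n (Q2 @ B) (Q3 @ T)"
proof -
  have cube: "cube_condition d e g" by (rule cube_condition_holds)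
  obtain P3 Q3 where c3: "complement d g = Some (P3, Q3)"
    using cube c1 c2 r unfolding cube_condition_def by (auto split: option.splits)
  obtain T where r2: "reversing 6 P3 (P1 @ A) = Common T []"
    and r3: "reversing 6 (Q3 @ T) (Q2 @ B) = Common [] []"
    using cube c1 c2 r c3 unfolding cube_condition_def by (auto split: reversal.splits)
  have p1: "pos_word n P1" using complement_pos_word[OF pd(1,2) c1] by auto
  have p2: "pos_word n Q2" using complement_pos_word[OF pd(2,3) c2] by auto
  have p3: "pos_word n P3" "pos_word n Q3" using complement_pos_word[OF pd(1,3) c3] by auto
  have "pos_eq n (P3 @ T) (P1 @ A)" and pT: "pos_word n T"
    using reversing_sound[OF r2] p3 p1 pAB by auto
  moreover have "pos_eq n (Q3 @ T) (Q2 @ B)"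
    using reversing_sound[OF r3] p3 p2 pAB pT by auto
  ultimately show ?thesis using that[OF c3] pos_eq_sym by blast
qed

text \<open>The cube condition makes \<open>complement_factors\<close> transitive, by induction on the length.\<close>
lemma complement_factors_trans:
  assumes complete: "\<And>l. l < length U \<Longrightarrow> complement_complete n l"
    and pu: "pos_word n (d # U)" and pv: "pos_word n v" and pw: "pos_word n w"
    and uv: "pos_eq n (d # U) v"
    and f1: "complement_factors n (d # U) v" and f2: "complement_factors n v w"
  shows "complement_factors n (d # U) w"
proof -
  obtain e V g W P1 Q1 Z1 P2 Q2 Z2 where vw: "v = e # V" "w = g # W"
    and c1: "complement d e = Some (P1, Q1)" and u1: "pos_eq n U (P1 @ Z1)" and v1: "pos_eq n V (Q1 @ Z1)"
    and c2: "complement e g = Some (P2, Q2)" and v2: "pos_eq n V (P2 @ Z2)" and w2: "pos_eq n W (Q2 @ Z2)"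
    using f1 f2 unfolding complement_factors_def by auto
  have pd: "pos_word n [d]" "pos_word n [e]" "pos_word n [g]" using pu pv pw vw by auto
  have p: "pos_word n Q1" "pos_word n P2" "pos_word n Z1" "pos_word n Z2"
    using complement_pos_word[OF pd(1,2) c1] complement_pos_word[OF pd(2,3) c2]
      pos_eq_pos_word[OF u1] pos_eq_pos_word[OF v2] pu pv vw by auto
  have e: "pos_eq n (Q1 @ Z1) (P2 @ Z2)" using v1 v2 by (meson pos_eq_sym pos_eq_trans)
  have len: "length (Q1 @ Z1) \<le> length U"
    using pos_eq_length[OF v1] pos_eq_length[OF uv] vw by simp
  have "reversing 6 Q1 P2 \<noteq> Out_of_fuel"
    using cube_condition_holds[of d e g] c1 c2 unfolding cube_condition_def by auto
  from reversing_complete[OF complete this _ _ e len] p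
  obtain A B Z where r: "reversing 6 Q1 P2 = Common A B" and z1: "pos_eq n Z1 (A @ Z)"
    and z2: "pos_eq n Z2 (B @ Z)"
    by auto
  have pAB: "pos_word n A" "pos_word n B" using pos_eq_pos_word[OF z1] pos_eq_pos_word[OF z2] p by auto
  obtain P3 Q3 T where c3: "complement d g = Some (P3, Q3)"
    and s1: "pos_eq n (P1 @ A) (P3 @ T)" and s2: "pos_eq n (Q2 @ B) (Q3 @ T)"
    using cube_condition_common_multiple[OF pd c1 c2 r pAB] .
  have "pos_eq n U (P3 @ T @ Z)"
    using u1 pos_eq_appendL[OF z1] pos_eq_appendR[OF s1, of Z] by (auto intro: pos_eq_trans)
  moreover have "pos_eq n W (Q3 @ T @ Z)"
    using w2 pos_eq_appendL[OF z2] pos_eq_appendR[OF s2, of Z] by (auto intro: pos_eq_trans)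
  ultimately show ?thesis using complement_factorsI[OF c3] vw by blast
qed

lemma complement_complete_all: "complement_complete n l"
proof (induction l rule: less_induct)
  case (less l)
  have "complement_factors n u v" if "cong_gen (pos_rels n) u v" "pos_word n u" "length u = Suc l" for u v
    using that
  proof (induction rule: cong_gen.induct)
    case (refl u)
    then show ?case by (cases u) (auto intro: complement_factors_refl)
  next
    case (sym u v)
    then have "complement_factors n u v"
      using pos_eq_pos_word[of n u v] pos_eq_length[of n u v] unfolding pos_eq_def by simp
    then show ?case by (rule complement_factors_sym)
  next
    case (trans u v w)
    obtain d U where u: "u = d # U" "length U = l" using trans.prems by (cases u) auto
    have "pos_word n v" "length v = Suc l"
      using trans pos_eq_pos_word[of n u v] pos_eq_length[of n u v] unfolding pos_eq_def by simp_all
    moreover have "pos_word n w"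
      using \<open>pos_word n v\<close> trans(2) pos_eq_pos_word[of n v w] unfolding pos_eq_def by simp
    ultimately show ?case
      using complement_factors_trans[OF less.IH, of U d v w] trans u unfolding pos_eq_def by simp
  next
    case (rel l' r' a b)
    then show ?case by (simp add: complement_factors_rel)
  qed
  then show ?case unfolding complement_complete_def pos_eq_def by blast
qed

lemma pos_eq_Cons_cancel:
  assumes "pos_word n (d # U)" "pos_eq n (d # U) (d # V)"
  shows "pos_eq n U V"
proof -
  obtain P Q Z where "complement d d = Some (P, Q)" "pos_eq n U (P @ Z)" "pos_eq n V (Q @ Z)"
    using complement_completeD[OF complement_complete_all assms] .
  moreover have "complement d d = Some ([], [])" using assms by (auto intro: complement_self)
  ultimately show ?thesis by (auto intro: pos_eq_sym pos_eq_trans)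
qed

lemma pos_eq_left_cancel: "pos_word n (W @ U) \<Longrightarrow> pos_eq n (W @ U) (W @ V) \<Longrightarrow> pos_eq n U V"
proof (induction W)
  case (Cons a W)
  then show ?case using pos_eq_Cons_cancel[of n a "W @ U" "W @ V"] by simp
qed simp

lemma pos_eq_right_cancel:
  assumes "pos_word n (U @ W)" "pos_eq n (U @ W) (V @ W)"
  shows "pos_eq n U V"
proof -
  have "pos_eq n (rev W @ rev U) (rev W @ rev V)" using pos_eq_rev[OF assms(2)] by simp
  moreover have "pos_word n (rev W @ rev U)" using assms(1) by (auto simp: pos_word_def)
  ultimately have "pos_eq n (rev U) (rev V)" by (rule pos_eq_left_cancel[rotated])
  then show ?thesis using pos_eq_rev by fastforce
qed

section \<open>The Garside element\<close>

lemma pos_eq_commute_far: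
  "idx_ok n j \<Longrightarrow> idx_ok n t \<Longrightarrow> t + 1 < j \<or> j + 1 < t \<Longrightarrow>
     pos_eq n [pos_letter b j, Sig t] [Sig t, pos_letter b j]"
  by (rule pos_eq_rel, cases b) (simp_all add: pos_letter_def pos_rels_def, arith)

lemma pos_eq_commute_same: "idx_ok n j \<Longrightarrow> pos_eq n [pos_letter b j, Sig j] [Sig j, pos_letter b j]"
  by (cases b) (simp_all add: pos_letter_def pos_rels_def pos_eq_rel)

lemma pos_eq_braid_up:
  "idx_ok n i \<Longrightarrow> idx_ok n (Suc i) \<Longrightarrow>
     pos_eq n [Sig i, Sig (Suc i), pos_letter b i] [pos_letter b (Suc i), Sig i, Sig (Suc i)]"
  by (rule pos_eq_rel, cases b) (simp_all add: pos_letter_def pos_rels_def)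

lemma pos_eq_braid_down:
  "idx_ok n i \<Longrightarrow> idx_ok n (Suc i) \<Longrightarrow>
     pos_eq n [Sig (Suc i), Sig i, pos_letter b (Suc i)] [pos_letter b i, Sig (Suc i), Sig i]"
  by (rule pos_eq_rel, cases b) (simp_all add: pos_letter_def pos_rels_def)

lemma pos_eq_commute_word:
  "(\<And>a. a \<in> set W \<Longrightarrow> pos_eq n [c, a] [a, c]) \<Longrightarrow> pos_eq n (c # W) (W @ [c])"
proof (induction W)
  case (Cons a W)
  have "pos_eq n (c # a # W) (a # c # W)" using pos_eq_appendR[OF Cons.prems[of a], of W] by simp
  also have "pos_eq n (a # c # W) (a # W @ [c])" using Cons by (auto intro: pos_eq_Cons)
  finally show ?case by simp
qed simp

lemma pos_eq_commute_far_word: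
  assumes "idx_ok n j" "\<And>a. a \<in> set W \<Longrightarrow> \<exists>t. a = Sig t \<and> idx_ok n t \<and> (t + 1 < j \<or> j + 1 < t)"
  shows "pos_eq n (pos_letter b j # W) (W @ [pos_letter b j])"
proof (rule pos_eq_commute_word)
  fix a assume "a \<in> set W"
  with assms(2) obtain t where "a = Sig t" "idx_ok n t" "t + 1 < j \<or> j + 1 < t" by blast
  then show "pos_eq n [pos_letter b j, a] [a, pos_letter b j]"
    using pos_eq_commute_far[OF assms(1)] by blast
qed

definition sig_up :: "nat \<Rightarrow> word" where
  "sig_up m = map Sig [1..<Suc m]"

definition sig_down :: "nat \<Rightarrow> word" where
  "sig_down m = map Sig (rev [1..<Suc m])"

text \<open>The Garside element \<open>\<sigma>\<^sub>1\<cdots>\<sigma>\<^sub>m \<sigma>\<^sub>1\<cdots>\<sigma>\<^sub>m\<^sub>-\<^sub>1 \<cdots> \<sigma>\<^sub>1\<close> of the braids on \<open>m + 1\<close> strands.\<close>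
primrec half_twist :: "nat \<Rightarrow> word" where
  "half_twist 0 = []"
| "half_twist (Suc m) = sig_up (Suc m) @ half_twist m"

lemma delta_half_twist: "delta n = half_twist (n - 1)"
proof -
  have "concat (map (\<lambda>k. map Sig [1..<k + 1]) (rev [1..<Suc m])) = half_twist m" for m
    by (induction m) (simp_all add: sig_up_def)
  from this[of "n - 1"] show ?thesis
    by (cases n) (simp_all add: delta_def)
qed

lemma set_half_twist: "a \<in> set (half_twist m) \<Longrightarrow> \<exists>t. a = Sig t \<and> 1 \<le> t \<and> t \<le> m"
  by (induction m) (auto simp: sig_up_def)

lemma sig_up_Suc: "sig_up (Suc m) = sig_up m @ [Sig (Suc m)]"
  by (simp add: sig_up_def)

lemma sig_down_Suc: "sig_down (Suc m) = Sig (Suc m) # sig_down m"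
  by (simp add: sig_down_def)

lemma sig_up_split:
  assumes "1 \<le> j" "j < m"
  shows "sig_up m = map Sig [1..<j] @ [Sig j, Sig (Suc j)] @ map Sig [Suc (Suc j)..<Suc m]"
proof -
  have "[1..<Suc m] = [1..<j] @ [j..<Suc m]" using assms upt_add_eq_append[of 1 j "Suc m - j"] by simp
  also have "[j..<Suc m] = j # Suc j # [Suc (Suc j)..<Suc m]" using assms by (simp add: upt_conv_Cons)
  finally show ?thesis by (simp add: sig_up_def)
qed

lemma sig_down_split:
  assumes "Suc (Suc k) \<le> m"
  shows "sig_down m = map Sig (rev [Suc (Suc (Suc k))..<Suc m]) @ [Sig (Suc (Suc k)), Sig (Suc k)]
           @ map Sig (rev [1..<Suc k])"
proof -
  have "[1..<Suc m] = [1..<Suc k] @ [Suc k..<Suc m]" using assms upt_add_eq_append[of 1 "Suc k" "m - k"] by simp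
  also have "[Suc k..<Suc m] = Suc k # Suc (Suc k) # [Suc (Suc (Suc k))..<Suc m]"
    using assms by (simp add: upt_conv_Cons)
  finally show ?thesis by (simp add: sig_down_def)
qed

lemma sig_up_shift:
  assumes "1 \<le> j" "j < m" "m < n"
  shows "pos_eq n (sig_up m @ [pos_letter b j]) (pos_letter b (Suc j) # sig_up m)"
proof -
  let ?A = "map Sig [1..<j]" and ?B = "map Sig [Suc (Suc j)..<Suc m]"
  have "pos_eq n (?B @ [pos_letter b j]) (pos_letter b j # ?B)"
    by (rule pos_eq_sym, rule pos_eq_commute_far_word) (use assms in \<open>auto simp: idx_ok_def\<close>)
  then have "pos_eq n (?A @ [Sig j, Sig (Suc j)] @ ?B @ [pos_letter b j])
      (?A @ [Sig j, Sig (Suc j), pos_letter b j] @ ?B)"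
    using pos_eq_appendL[of n _ _ "?A @ [Sig j, Sig (Suc j)]"] by simp
  also have "pos_eq n (?A @ [Sig j, Sig (Suc j), pos_letter b j] @ ?B)
      (?A @ [pos_letter b (Suc j), Sig j, Sig (Suc j)] @ ?B)"
    by (rule pos_eq_append, rule pos_eq_braid_up) (use assms in \<open>auto simp: idx_ok_def\<close>)
  also have "pos_eq n (?A @ [pos_letter b (Suc j), Sig j, Sig (Suc j)] @ ?B)
      (pos_letter b (Suc j) # ?A @ [Sig j, Sig (Suc j)] @ ?B)"
  proof -
    have "pos_eq n (pos_letter b (Suc j) # ?A) (?A @ [pos_letter b (Suc j)])"
      by (rule pos_eq_commute_far_word) (use assms in \<open>auto simp: idx_ok_def\<close>)
    from pos_eq_appendR[OF pos_eq_sym[OF this], of "[Sig j, Sig (Suc j)] @ ?B"] show ?thesis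
      by (simp del: upt_Suc)
  qed
  finally show ?thesis using sig_up_split[OF assms(1,2)] by simp
qed

lemma sig_down_shift:
  assumes "Suc (Suc k) \<le> m" "m < n"
  shows "pos_eq n (sig_down m @ [pos_letter b (Suc (Suc k))]) (pos_letter b (Suc k) # sig_down m)"
proof -
  let ?A = "map Sig (rev [Suc (Suc (Suc k))..<Suc m])" and ?B = "map Sig (rev [1..<Suc k])"
  let ?s = "[Sig (Suc (Suc k)), Sig (Suc k)]"
  have "pos_eq n (?B @ [pos_letter b (Suc (Suc k))]) (pos_letter b (Suc (Suc k)) # ?B)"
    by (rule pos_eq_sym, rule pos_eq_commute_far_word) (use assms in \<open>auto simp: idx_ok_def\<close>)
  then have "pos_eq n (?A @ ?s @ ?B @ [pos_letter b (Suc (Suc k))])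
      (?A @ [Sig (Suc (Suc k)), Sig (Suc k), pos_letter b (Suc (Suc k))] @ ?B)"
    using pos_eq_appendL[of n _ _ "?A @ ?s"] by simp
  also have "pos_eq n (?A @ [Sig (Suc (Suc k)), Sig (Suc k), pos_letter b (Suc (Suc k))] @ ?B)
      (?A @ [pos_letter b (Suc k), Sig (Suc (Suc k)), Sig (Suc k)] @ ?B)"
    by (rule pos_eq_append, rule pos_eq_braid_down) (use assms in \<open>auto simp: idx_ok_def\<close>)
  also have "pos_eq n (?A @ [pos_letter b (Suc k), Sig (Suc (Suc k)), Sig (Suc k)] @ ?B)
      (pos_letter b (Suc k) # ?A @ ?s @ ?B)"
  proof -
    have "pos_eq n (pos_letter b (Suc k) # ?A) (?A @ [pos_letter b (Suc k)])"
      by (rule pos_eq_commute_far_word) (use assms in \<open>auto simp: idx_ok_def\<close>)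
    from pos_eq_appendR[OF pos_eq_sym[OF this], of "?s @ ?B"] show ?thesis
      by (simp del: upt_Suc)
  qed
  finally show ?thesis using sig_down_split[OF assms(1)] by simp
qed

lemma half_twist_sig_down: "Suc m < n \<Longrightarrow> pos_eq n (half_twist (Suc m)) (half_twist m @ sig_down (Suc m))"
proof (induction m)
  case 0
  then show ?case by (simp add: sig_up_def sig_down_def)
next
  case (Suc m)
  have "pos_eq n (half_twist (Suc (Suc m))) (sig_up (Suc (Suc m)) @ half_twist m @ sig_down (Suc m))"
    using Suc by (auto intro: pos_eq_appendL)
  also have "pos_eq n (sig_up (Suc (Suc m)) @ half_twist m @ sig_down (Suc m))
      (sig_up (Suc m) @ half_twist m @ [Sig (Suc (Suc m))] @ sig_down (Suc m))"
  proof -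
    have "pos_eq n (pos_letter True (Suc (Suc m)) # half_twist m) (half_twist m @ [pos_letter True (Suc (Suc m))])"
      by (rule pos_eq_commute_far_word) (use Suc.prems in \<open>auto dest!: set_half_twist simp: idx_ok_def\<close>)
    from pos_eq_append[OF this, of "sig_up (Suc m)" "sig_down (Suc m)"] show ?thesis
      by (simp add: sig_up_Suc pos_letter_def)
  qed
  also have "sig_up (Suc m) @ half_twist m @ [Sig (Suc (Suc m))] @ sig_down (Suc m)
      = half_twist (Suc m) @ sig_down (Suc (Suc m))"
    by (simp add: sig_down_Suc)
  finally show ?case .
qed

definition pos_upto :: "nat \<Rightarrow> word \<Rightarrow> bool" where
  "pos_upto m W \<longleftrightarrow> (\<forall>a\<in>set W. is_pos_letter a \<and> 1 \<le> letter_idx a \<and> letter_idx a \<le> m)"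

lemma pos_upto_simps [simp]:
  "pos_upto m []"
  "pos_upto m (a # W) \<longleftrightarrow> is_pos_letter a \<and> 1 \<le> letter_idx a \<and> letter_idx a \<le> m \<and> pos_upto m W"
  "pos_upto m (U @ W) \<longleftrightarrow> pos_upto m U \<and> pos_upto m W"
  unfolding pos_upto_def by auto

lemma pos_word_iff_pos_upto: "pos_word n W \<longleftrightarrow> pos_upto (n - 1) W"
  unfolding pos_word_def pos_upto_def idx_ok_def by auto

lemma pos_upto_mono: "pos_upto m W \<Longrightarrow> m \<le> m' \<Longrightarrow> pos_upto m' W"
  unfolding pos_upto_def by auto

lemma pos_upto_pos_word: "pos_upto m W \<Longrightarrow> m < n \<Longrightarrow> pos_word n W"
  unfolding pos_word_iff_pos_upto by (rule pos_upto_mono) auto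

lemma pos_eq_pos_upto: "pos_eq n u v \<Longrightarrow> pos_upto m u \<longleftrightarrow> pos_upto m v"
  unfolding pos_eq_def pos_upto_def by (rule cong_gen_letterwise) (auto simp: pos_rels_def)

lemma pos_upto_half_twist: "pos_upto m (half_twist m)"
  unfolding pos_upto_def by (auto dest!: set_half_twist)

lemma pos_upto_sig_up: "pos_upto m (sig_up m)"
  unfolding pos_upto_def sig_up_def by auto

fun flip :: "nat \<Rightarrow> letter \<Rightarrow> letter" where
  "flip m (Sig i) = Sig (Suc m - i)"
| "flip m (SigInv i) = SigInv (Suc m - i)"
| "flip m (X i) = X (Suc m - i)"

lemma flip_pos_letter [simp]: "flip m (pos_letter b j) = pos_letter b (Suc m - j)"
  by (simp add: pos_letter_def)

lemma pos_upto_flip: "pos_upto m W \<Longrightarrow> pos_upto m (map (flip m) W)"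
  unfolding pos_upto_def by (auto elim!: flip.elims is_pos_letter.elims)

lemma flip_flip: "pos_upto m W \<Longrightarrow> map (flip m) (map (flip m) W) = W"
  by (induction W) (auto elim!: flip.elims is_pos_letter.elims)

lemma pos_eq_flip:
  assumes "pos_eq n u v" "pos_upto m u" "m < n"
  shows "pos_eq n (map (flip m) u) (map (flip m) v)"
  using assms(1,2) unfolding pos_eq_def pos_upto_def
proof (rule cong_gen_map)
  fix l r assume "(l, r) \<in> pos_rels n" "\<forall>a\<in>set l. is_pos_letter a \<and> 1 \<le> letter_idx a \<and> letter_idx a \<le> m"
  then have "(map (flip m) l, map (flip m) r) \<in> pos_rels n \<or> (map (flip m) r, map (flip m) l) \<in> pos_rels n"
    using assms(3) unfolding pos_rels_def idx_ok_def by (elim UnE) auto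
  then show "cong_gen (pos_rels n) (map (flip m) l) (map (flip m) r)"
    using pos_eq_rel unfolding pos_eq_def by blast
qed (auto simp: pos_rels_def)

lemma half_twist_conj_letter:
  "m < n \<Longrightarrow> 1 \<le> j \<Longrightarrow> j \<le> m \<Longrightarrow>
     pos_eq n (half_twist m @ [pos_letter b j]) (pos_letter b (Suc m - j) # half_twist m)"
proof (induction m arbitrary: j)
  case 0
  then show ?case by simp
next
  case (Suc m)
  show ?case
  proof (cases "j \<le> m")
    case True
    have "pos_eq n (half_twist (Suc m) @ [pos_letter b j]) (sig_up (Suc m) @ pos_letter b (Suc m - j) # half_twist m)"
      using Suc.IH[of j] Suc.prems True pos_eq_appendL[of n _ _ "sig_up (Suc m)"] by simp
    also have "pos_eq n (sig_up (Suc m) @ pos_letter b (Suc m - j) # half_twist m)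
        (pos_letter b (Suc (Suc m - j)) # half_twist (Suc m))"
      using pos_eq_appendR[OF sig_up_shift[of "Suc m - j" "Suc m" n b], of "half_twist m"] Suc.prems True
      by simp
    finally show ?thesis using True by (simp add: Suc_diff_le)
  next
    case False
    then have j: "j = Suc m" using Suc.prems by simp
    show ?thesis
    proof (cases m)
      case 0
      then show ?thesis
        using j pos_eq_sym[OF pos_eq_commute_same[of n 1 b]] Suc.prems by (simp add: sig_up_def idx_ok_def)
    next
      case (Suc m')
      have "pos_eq n (half_twist (Suc m) @ [pos_letter b j]) (half_twist m @ sig_down (Suc m) @ [pos_letter b (Suc m)])"
        using half_twist_sig_down[of m n] Suc.prems j pos_eq_appendR by fastforce
      also have "pos_eq n (half_twist m @ sig_down (Suc m) @ [pos_letter b (Suc m)])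
          (half_twist m @ [pos_letter b m] @ sig_down (Suc m))"
        using sig_down_shift[of m' "Suc m" n b] Suc Suc.prems pos_eq_appendL[of n _ _ "half_twist m"] by simp
      also have "pos_eq n (half_twist m @ [pos_letter b m] @ sig_down (Suc m))
          (pos_letter b 1 # half_twist m @ sig_down (Suc m))"
        using pos_eq_appendR[OF Suc.IH[of m], of "sig_down (Suc m)"] Suc.prems Suc by simp
      also have "pos_eq n (pos_letter b 1 # half_twist m @ sig_down (Suc m)) (pos_letter b 1 # half_twist (Suc m))"
        using half_twist_sig_down[of m n] Suc.prems by (auto intro: pos_eq_Cons pos_eq_sym)
      finally show ?thesis using j by simp
    qed
  qed
qed

lemma half_twist_conj:
  "m < n \<Longrightarrow> pos_upto m W \<Longrightarrow> pos_eq n (half_twist m @ W) (map (flip m) W @ half_twist m)"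
proof (induction W)
  case (Cons a W)
  obtain b where a: "a = pos_letter b (letter_idx a)" using pos_letter_cases Cons.prems by auto
  have "pos_eq n (half_twist m @ [a]) (flip m a # half_twist m)"
    using half_twist_conj_letter[of m n "letter_idx a" b] Cons.prems a by (metis pos_upto_simps(2) flip_pos_letter)
  then have "pos_eq n (half_twist m @ a # W) (flip m a # half_twist m @ W)"
    using pos_eq_appendR[of n _ _ W] by fastforce
  also have "pos_eq n (flip m a # half_twist m @ W) (flip m a # map (flip m) W @ half_twist m)"
    using Cons by (auto intro: pos_eq_Cons)
  finally show ?case by simp
qed simp

lemma half_twist_flip: "m < n \<Longrightarrow> pos_eq n (map (flip m) (half_twist m)) (half_twist m)"
proof -
  assume m: "m < n"
  have "pos_eq n (half_twist m @ map (flip m) (half_twist m)) (half_twist m @ half_twist m)"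
    using half_twist_conj[OF m pos_upto_flip[OF pos_upto_half_twist]] flip_flip[OF pos_upto_half_twist] by simp
  moreover have "pos_word n (half_twist m @ map (flip m) (half_twist m))"
    using pos_upto_pos_word[OF _ m] pos_upto_half_twist pos_upto_flip[OF pos_upto_half_twist] by simp
  ultimately show ?thesis using pos_eq_left_cancel by blast
qed

lemma half_twist_right_quotient:
  "m < n \<Longrightarrow> 1 \<le> j \<Longrightarrow> j \<le> m \<Longrightarrow> \<exists>R. pos_upto m R \<and> pos_eq n (R @ [Sig j]) (half_twist m)"
proof (induction m arbitrary: j)
  case 0
  then show ?case by simp
next
  case (Suc m)
  show ?case
  proof (cases "j \<le> m")
    case True
    obtain R where R: "pos_upto m R" "pos_eq n (R @ [Sig j]) (half_twist m)" using Suc True by auto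
    have "pos_eq n ((sig_up (Suc m) @ R) @ [Sig j]) (half_twist (Suc m))"
      using pos_eq_appendL[OF R(2), of "sig_up (Suc m)"] by simp
    moreover have "pos_upto (Suc m) (sig_up (Suc m) @ R)"
      using pos_upto_sig_up R(1) pos_upto_mono by auto
    ultimately show ?thesis by blast
  next
    case False
    then have j: "j = Suc m" using Suc.prems by simp
    define S where "S = half_twist m @ map Sig (rev [2..<Suc (Suc m)])"
    have "sig_down (Suc m) = map Sig (rev [2..<Suc (Suc m)]) @ [Sig 1]"
      unfolding sig_down_def by (simp add: upt_conv_Cons numeral_2_eq_2 del: upt_Suc)
    then have S: "pos_eq n (S @ [Sig 1]) (half_twist (Suc m))"
      using half_twist_sig_down[of m n] Suc.prems by (auto simp: S_def intro: pos_eq_sym)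
    have upto: "pos_upto (Suc m) (S @ [Sig 1])"
      using pos_eq_pos_upto[OF S] pos_upto_half_twist by blast
    \<comment> \<open>flipping \<open>S \<sigma>\<^sub>1 = \<Delta>\<close> gives a word ending with \<open>\<sigma>\<^sub>m\<^sub>+\<^sub>1\<close>\<close>
    have "pos_eq n (map (flip (Suc m)) (S @ [Sig 1])) (map (flip (Suc m)) (half_twist (Suc m)))"
      using pos_eq_flip[OF S upto Suc.prems(1)] .
    also have "pos_eq n (map (flip (Suc m)) (half_twist (Suc m))) (half_twist (Suc m))"
      using half_twist_flip[OF Suc.prems(1)] .
    finally have "pos_eq n (map (flip (Suc m)) S @ [Sig (Suc m)]) (half_twist (Suc m))" by simp
    moreover have "pos_upto (Suc m) (map (flip (Suc m)) S)" using pos_upto_flip[of "Suc m" S] upto by simp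
    ultimately show ?thesis using j by blast
  qed
qed

definition tau :: "nat \<Rightarrow> letter \<Rightarrow> letter" where
  "tau n = flip (n - 1)"

lemma pos_word_delta: "pos_word n (delta n)"
  unfolding delta_half_twist pos_word_iff_pos_upto by (rule pos_upto_half_twist)

lemma pos_word_0: "pos_word 0 W \<longleftrightarrow> W = []"
  by (cases W) (auto simp: idx_ok_def)

lemma delta_conj:
  assumes "pos_word n W"
  shows "pos_eq n (delta n @ W) (map (tau n) W @ delta n)"
proof (cases n)
  case 0
  then show ?thesis using assms by (simp add: pos_word_0)
next
  case (Suc m)
  then show ?thesis
    using half_twist_conj[of m n W] assms by (simp add: delta_half_twist pos_word_iff_pos_upto tau_def)
qed

lemma pos_word_tau: "pos_word n W \<Longrightarrow> pos_word n (map (tau n) W)"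
  unfolding pos_word_iff_pos_upto tau_def by (rule pos_upto_flip)

lemma pos_eq_tau:
  assumes "pos_eq n u v" "pos_word n u"
  shows "pos_eq n (map (tau n) u) (map (tau n) v)"
proof (cases n)
  case 0
  then show ?thesis using assms pos_eq_length[OF assms(1)] by (simp add: pos_word_0)
next
  case (Suc m)
  then show ?thesis using pos_eq_flip[OF assms(1), of m] assms(2) by (simp add: pos_word_iff_pos_upto tau_def)
qed

lemma tau_delta: "pos_eq n (map (tau n) (delta n)) (delta n)"
  using half_twist_flip[of "n - 1" n] unfolding delta_half_twist tau_def by (cases n) auto

lemma delta_right_quotient:
  assumes "idx_ok n i"
  shows "\<exists>R. pos_word n R \<and> pos_eq n (R @ [Sig i]) (delta n) \<and> pos_eq n (Sig (n - i) # R) (delta n)"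
proof -
  obtain R where R: "pos_upto (n - 1) R" "pos_eq n (R @ [Sig i]) (delta n)"
    using half_twist_right_quotient[of "n - 1" n i] assms unfolding delta_half_twist by (auto simp: idx_ok_def)
  have pR: "pos_word n R" using R(1) pos_word_iff_pos_upto by blast
  have "pos_eq n ((Sig (n - i) # R) @ [Sig i]) (Sig (n - i) # delta n)"
    using pos_eq_Cons[OF R(2)] by simp
  also have "pos_eq n (Sig (n - i) # delta n) (delta n @ [Sig i])"
    using pos_eq_sym[OF delta_conj[of n "[Sig i]"]] assms by (auto simp: idx_ok_def tau_def)
  finally have "pos_eq n (Sig (n - i) # R) (delta n)"
    by (rule pos_eq_right_cancel[rotated]) (use pR assms in \<open>auto simp: idx_ok_def\<close>)
  then show ?thesis using pR R(2) by blast
qed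

definition delta_power :: "nat \<Rightarrow> nat \<Rightarrow> word" where
  "delta_power n k = concat (replicate k (delta n))"

lemma delta_power_0 [simp]: "delta_power n 0 = []"
  by (simp add: delta_power_def)

lemma delta_power_Suc: "delta_power n (Suc k) = delta n @ delta_power n k"
  by (simp add: delta_power_def)

lemma delta_power_add: "delta_power n (a + b) = delta_power n a @ delta_power n b"
  by (simp add: delta_power_def replicate_add)

lemma delta_power_Suc': "delta_power n (Suc k) = delta_power n k @ delta n"
  using delta_power_add[of n k 1] by (simp add: delta_power_Suc)

lemma pos_word_delta_power: "pos_word n (delta_power n k)"
  by (induction k) (auto simp: delta_power_Suc pos_word_delta)

definition twist :: "nat \<Rightarrow> nat \<Rightarrow> word \<Rightarrow> word" where
  "twist n k W = map (tau n ^^ k) W"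

lemma twist_0 [simp]: "twist n 0 W = W"
  by (simp add: twist_def)

lemma twist_Suc: "twist n (Suc k) W = map (tau n) (twist n k W)"
  by (simp add: twist_def)

lemma twist_Nil [simp]: "twist n k [] = []"
  by (simp add: twist_def)

lemma twist_append [simp]: "twist n k (U @ W) = twist n k U @ twist n k W"
  by (simp add: twist_def)

lemma twist_twist: "twist n l (twist n k W) = twist n (l + k) W"
  by (simp add: twist_def funpow_add)

lemma pos_word_twist: "pos_word n W \<Longrightarrow> pos_word n (twist n k W)"
  by (induction k) (simp_all add: twist_Suc pos_word_tau)

lemma pos_eq_twist: "pos_eq n u v \<Longrightarrow> pos_word n u \<Longrightarrow> pos_eq n (twist n k u) (twist n k v)"
  by (induction k) (simp_all add: twist_Suc pos_eq_tau pos_word_twist)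

lemma twist_delta: "pos_eq n (twist n k (delta n)) (delta n)"
proof (induction k)
  case (Suc k)
  have "pos_eq n (map (tau n) (twist n k (delta n))) (map (tau n) (delta n))"
    using pos_eq_tau[OF Suc.IH] pos_word_twist pos_word_delta by blast
  then show ?case using tau_delta pos_eq_trans by (auto simp: twist_Suc)
qed simp

lemma twist_delta_power: "pos_eq n (twist n k (delta_power n j)) (delta_power n j)"
  by (induction j) (auto simp: delta_power_Suc intro: pos_eq_append_both twist_delta)

lemma delta_power_conj: "pos_word n W \<Longrightarrow> pos_eq n (delta_power n k @ W) (twist n k W @ delta_power n k)"
proof (induction k arbitrary: W)
  case (Suc k)
  have "pos_eq n (delta n @ delta_power n k @ W) (delta n @ twist n k W @ delta_power n k)"
    using Suc by (auto intro: pos_eq_appendL)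
  also have "pos_eq n (delta n @ twist n k W @ delta_power n k) (map (tau n) (twist n k W) @ delta n @ delta_power n k)"
    using pos_eq_appendR[OF delta_conj[OF pos_word_twist[OF Suc.prems, of k]], of "delta_power n k"] by simp
  finally show ?case by (simp add: delta_power_Suc twist_Suc)
qed simp

section \<open>Fractions in the singular braid monoid\<close>

lemma sb_eq_refl [simp]: "sb_eq n u u"
  unfolding sb_eq_def by (rule cong_gen.refl)

lemma sb_eq_sym: "sb_eq n u v \<Longrightarrow> sb_eq n v u"
  unfolding sb_eq_def by (rule cong_gen.sym)

lemma sb_eq_trans [trans]: "sb_eq n u v \<Longrightarrow> sb_eq n v w \<Longrightarrow> sb_eq n u w"
  unfolding sb_eq_def by (rule cong_gen.trans)

lemma sb_eq_append: "sb_eq n u v \<Longrightarrow> sb_eq n (w @ u @ z) (w @ v @ z)"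
  unfolding sb_eq_def by (rule cong_gen_append)

lemma sb_eq_appendL: "sb_eq n u v \<Longrightarrow> sb_eq n (w @ u) (w @ v)"
  using sb_eq_append[of n u v w "[]"] by simp

lemma sb_eq_appendR: "sb_eq n u v \<Longrightarrow> sb_eq n (u @ z) (v @ z)"
  using sb_eq_append[of n u v "[]" z] by simp

lemma pos_eq_imp_sb_eq: "pos_eq n u v \<Longrightarrow> sb_eq n u v"
  unfolding pos_eq_def sb_eq_def by (rule cong_gen_mono) (auto simp: sb_rels_def)

lemma sb_word_simps [simp]:
  "sb_word n []"
  "sb_word n (a # u) \<longleftrightarrow> idx_ok n (letter_idx a) \<and> sb_word n u"
  "sb_word n (u @ v) \<longleftrightarrow> sb_word n u \<and> sb_word n v"
  unfolding sb_word_def by auto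

lemma sb_eq_sb_word: "sb_eq n u v \<Longrightarrow> sb_word n u \<longleftrightarrow> sb_word n v"
  unfolding sb_eq_def sb_word_def by (rule cong_gen_letterwise) (auto simp: sb_rels_def pos_rels_def)

lemma pos_word_imp_sb_word: "pos_word n u \<Longrightarrow> sb_word n u"
  unfolding pos_word_def sb_word_def by auto

lemma sb_eq_Sig_SigInv: "idx_ok n i \<Longrightarrow> sb_eq n [Sig i, SigInv i] []"
  unfolding sb_eq_def by (rule cong_gen_of_rel) (auto simp: sb_rels_def)

lemma sb_eq_SigInv_Sig: "idx_ok n i \<Longrightarrow> sb_eq n [SigInv i, Sig i] []"
  unfolding sb_eq_def by (rule cong_gen_of_rel) (auto simp: sb_rels_def)

lemma inv_word_simps [simp]:
  "inv_word [] = []"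
  "inv_word (a # w) = inv_word w @ [inv_letter a]"
  "inv_word (u @ w) = inv_word w @ inv_word u"
  unfolding inv_word_def by auto

lemma sb_eq_inv_word:
  assumes "set w \<subseteq> Sig ` {i. idx_ok n i}"
  shows "sb_eq n (w @ inv_word w) [] \<and> sb_eq n (inv_word w @ w) []"
  using assms
proof (induction w)
  case (Cons a w)
  obtain i where a: "a = Sig i" "idx_ok n i" using Cons.prems by auto
  have IH: "sb_eq n (w @ inv_word w) []" "sb_eq n (inv_word w @ w) []" using Cons by auto
  have "sb_eq n ((a # w) @ inv_word (a # w)) ([Sig i] @ [] @ [SigInv i])"
    using sb_eq_append[OF IH(1), of "[Sig i]" "[SigInv i]"] a by simp
  also have "sb_eq n ([Sig i] @ [] @ [SigInv i]) []" using sb_eq_Sig_SigInv[OF a(2)] by simp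
  finally have right: "sb_eq n ((a # w) @ inv_word (a # w)) []" .
  have "sb_eq n (inv_word (a # w) @ (a # w)) (inv_word w @ [] @ w)"
    using sb_eq_append[OF sb_eq_SigInv_Sig[OF a(2)], of "inv_word w" w] a by simp
  then have "sb_eq n (inv_word (a # w) @ (a # w)) []" using IH(2) sb_eq_trans by simp
  with right show ?case ..
qed simp

lemma set_delta: "set (delta n) \<subseteq> Sig ` {i. idx_ok n i}"
  unfolding delta_half_twist by (auto dest!: set_half_twist simp: idx_ok_def)

lemma delta_inv_delta: "sb_eq n (delta n @ inv_word (delta n)) []"
  using sb_eq_inv_word[OF set_delta] by blast

lemma inv_delta_delta: "sb_eq n (inv_word (delta n) @ delta n) []"
  using sb_eq_inv_word[OF set_delta] by blast

lemma sb_word_inv_delta: "sb_word n (inv_word (delta n))"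
  using set_delta[of n] unfolding sb_word_def inv_word_def by auto

definition inv_delta_power :: "nat \<Rightarrow> nat \<Rightarrow> word" where
  "inv_delta_power n k = concat (replicate k (inv_word (delta n)))"

lemma inv_delta_power_0 [simp]: "inv_delta_power n 0 = []"
  by (simp add: inv_delta_power_def)

lemma inv_delta_power_Suc: "inv_delta_power n (Suc k) = inv_word (delta n) @ inv_delta_power n k"
  by (simp add: inv_delta_power_def)

lemma inv_delta_power_add: "inv_delta_power n (a + b) = inv_delta_power n a @ inv_delta_power n b"
  by (simp add: inv_delta_power_def replicate_add)

lemma sb_word_inv_delta_power: "sb_word n (inv_delta_power n k)"
  by (induction k) (simp_all add: inv_delta_power_Suc sb_word_inv_delta)

lemma delta_pow_nonneg: "0 \<le> m \<Longrightarrow> delta_pow n m = delta_power n (nat m)"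
  by (simp add: delta_pow_def delta_power_def)

lemma delta_pow_neg: "m < 0 \<Longrightarrow> delta_pow n m = inv_delta_power n (nat (- m))"
  by (simp add: delta_pow_def inv_delta_power_def)

lemma inv_delta_power_delta_power:
  "sb_eq n (inv_delta_power n k @ delta_power n j) (delta_pow n (int j - int k))"
proof (induction k arbitrary: j)
  case 0
  then show ?case by (simp add: delta_pow_nonneg)
next
  case (Suc k)
  show ?case
  proof (cases j)
    case 0
    have "nat (int k + 1) = Suc k" by simp
    then show ?thesis using 0 by (simp add: delta_pow_neg)
  next
    case (Suc j')
    have "inv_delta_power n (Suc k) @ delta_power n j
        = inv_delta_power n k @ (inv_word (delta n) @ delta n) @ delta_power n j'"
      using Suc inv_delta_power_add[of n k 1] by (simp add: inv_delta_power_Suc delta_power_Suc)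
    also have "sb_eq n \<dots> (inv_delta_power n k @ [] @ delta_power n j')"
      by (rule sb_eq_append[OF inv_delta_delta])
    also have "sb_eq n \<dots> (delta_pow n (int j' - int k))" using Suc.IH by simp
    finally show ?thesis using Suc by simp
  qed
qed

text \<open>A pair \<open>(k, P)\<close> with \<open>P\<close> positive stands for the fraction \<open>\<Delta>\<^sup>-\<^sup>k P\<close>.  Since
  \<open>P \<Delta>\<^sup>-\<^sup>l = \<Delta>\<^sup>-\<^sup>l \<tau>\<^sup>l(P)\<close>, fractions multiply as follows.\<close>
definition frac_mult :: "nat \<Rightarrow> nat \<times> word \<Rightarrow> nat \<times> word \<Rightarrow> nat \<times> word" where
  "frac_mult n x y = (fst x + fst y, twist n (fst y) (snd x) @ snd y)"

lemma frac_mult_simp [simp]: "frac_mult n (k, P) (l, Q) = (k + l, twist n l P @ Q)"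
  by (simp add: frac_mult_def)

lemma frac_mult_assoc: "frac_mult n (frac_mult n x y) z = frac_mult n x (frac_mult n y z)"
  by (cases x; cases y; cases z) (simp add: twist_twist ac_simps)

definition delta_quot :: "nat \<Rightarrow> nat \<Rightarrow> word" where
  "delta_quot n i = (SOME R. pos_word n R \<and> pos_eq n (R @ [Sig i]) (delta n) \<and> pos_eq n (Sig (n - i) # R) (delta n))"

lemma delta_quot_spec:
  "idx_ok n i \<Longrightarrow> pos_word n (delta_quot n i) \<and> pos_eq n (delta_quot n i @ [Sig i]) (delta n)
     \<and> pos_eq n (Sig (n - i) # delta_quot n i) (delta n)"
  unfolding delta_quot_def by (rule someI_ex) (rule delta_right_quotient)

fun letter_frac :: "nat \<Rightarrow> letter \<Rightarrow> nat \<times> word" where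
  "letter_frac n (Sig i) = (0, [Sig i])"
| "letter_frac n (X i) = (0, [X i])"
| "letter_frac n (SigInv i) = (1, delta_quot n i)"

fun word_frac :: "nat \<Rightarrow> word \<Rightarrow> nat \<times> word" where
  "word_frac n [] = (0, [])"
| "word_frac n (a # W) = frac_mult n (letter_frac n a) (word_frac n W)"

lemma word_frac_append: "word_frac n (U @ W) = frac_mult n (word_frac n U) (word_frac n W)"
proof (induction U)
  case Nil
  then show ?case by (cases "word_frac n W") simp
next
  case (Cons a U)
  then show ?case by (simp add: frac_mult_assoc)
qed

lemma word_frac_pos_word: "pos_word n W \<Longrightarrow> word_frac n W = (0, W)"
proof (induction W)
  case (Cons a W)
  then show ?case by (cases a) auto
qed simp

lemma pos_word_letter_frac: "idx_ok n (letter_idx a) \<Longrightarrow> pos_word n (snd (letter_frac n a))"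
  using delta_quot_spec by (cases a) auto

lemma pos_word_snd_word_frac: "sb_word n W \<Longrightarrow> pos_word n (snd (word_frac n W))"
  by (induction W) (auto simp: frac_mult_def pos_word_letter_frac pos_word_twist)

definition frac_eq :: "nat \<Rightarrow> nat \<times> word \<Rightarrow> nat \<times> word \<Rightarrow> bool" where
  "frac_eq n x y \<longleftrightarrow> (\<exists>N. fst x \<le> N \<and> fst y \<le> N \<and>
     pos_eq n (delta_power n (N - fst x) @ snd x) (delta_power n (N - fst y) @ snd y))"

lemma frac_eq_raise:
  assumes "pos_eq n (delta_power n (N - a) @ P) (delta_power n (N - b) @ Q)" "a \<le> N" "b \<le> N" "N \<le> M"
  shows "pos_eq n (delta_power n (M - a) @ P) (delta_power n (M - b) @ Q)"
proof -
  have "M - a = (M - N) + (N - a)" "M - b = (M - N) + (N - b)" using assms by auto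
  then show ?thesis using pos_eq_appendL[OF assms(1), of "delta_power n (M - N)"] by (simp add: delta_power_add)
qed

lemma frac_eq_refl: "frac_eq n x x"
  unfolding frac_eq_def by auto

lemma frac_eq_sym: "frac_eq n x y \<Longrightarrow> frac_eq n y x"
  unfolding frac_eq_def using pos_eq_sym by blast

lemma frac_eq_trans [trans]: "frac_eq n x y \<Longrightarrow> frac_eq n y z \<Longrightarrow> frac_eq n x z"
proof -
  assume "frac_eq n x y" "frac_eq n y z"
  then obtain N1 N2 where
    1: "fst x \<le> N1" "fst y \<le> N1" "pos_eq n (delta_power n (N1 - fst x) @ snd x) (delta_power n (N1 - fst y) @ snd y)"
    and 2: "fst y \<le> N2" "fst z \<le> N2" "pos_eq n (delta_power n (N2 - fst y) @ snd y) (delta_power n (N2 - fst z) @ snd z)"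
    unfolding frac_eq_def by blast
  have "pos_eq n (delta_power n (N1 + N2 - fst x) @ snd x) (delta_power n (N1 + N2 - fst y) @ snd y)"
    using frac_eq_raise[OF 1(3) 1(1,2)] by simp
  also have "pos_eq n (delta_power n (N1 + N2 - fst y) @ snd y) (delta_power n (N1 + N2 - fst z) @ snd z)"
    using frac_eq_raise[OF 2(3) 2(1,2), of "N1 + N2"] by simp
  finally show ?thesis unfolding frac_eq_def using 1 2 by (intro exI[of _ "N1 + N2"]) simp
qed

lemma frac_eq_mult_right:
  assumes "frac_eq n x x'" "pos_word n (snd x)" "pos_word n (snd x')"
  shows "frac_eq n (frac_mult n x y) (frac_mult n x' y)"
proof -
  obtain k P k' P' l Q where xs: "x = (k, P)" "x' = (k', P')" "y = (l, Q)"
    by (cases x; cases x'; cases y) auto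
  obtain N where N: "k \<le> N" "k' \<le> N" "pos_eq n (delta_power n (N - k) @ P) (delta_power n (N - k') @ P')"
    using assms(1) xs unfolding frac_eq_def by auto
  have "pos_eq n (delta_power n (N - k) @ twist n l P) (twist n l (delta_power n (N - k)) @ twist n l P)"
    using pos_eq_appendR[OF pos_eq_sym[OF twist_delta_power]] .
  also have "pos_eq n \<dots> (twist n l (delta_power n (N - k')) @ twist n l P')"
    using pos_eq_twist[OF N(3)] pos_word_delta_power assms(2) xs by simp
  also have "pos_eq n \<dots> (delta_power n (N - k') @ twist n l P')"
    using pos_eq_appendR[OF twist_delta_power] .
  finally have "pos_eq n ((delta_power n (N - k) @ twist n l P) @ Q) ((delta_power n (N - k') @ twist n l P') @ Q)"
    by (rule pos_eq_appendR)
  then show ?thesis unfolding frac_eq_def using xs N by (intro exI[of _ "N + l"]) simp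
qed

lemma frac_eq_mult_left:
  assumes "frac_eq n y y'" "pos_word n (snd x)"
  shows "frac_eq n (frac_mult n x y) (frac_mult n x y')"
proof -
  obtain k P l Q l' Q' where xs: "x = (k, P)" "y = (l, Q)" "y' = (l', Q')"
    by (cases x; cases y; cases y') auto
  obtain M where M: "l \<le> M" "l' \<le> M" "pos_eq n (delta_power n (M - l) @ Q) (delta_power n (M - l') @ Q')"
    using assms(1) xs unfolding frac_eq_def by auto
  have pP: "pos_word n P" using assms(2) xs by simp
  have conj: "pos_eq n (delta_power n (M - j) @ twist n j P) (twist n M P @ delta_power n (M - j))"
    if "j \<le> M" for j
    using delta_power_conj[OF pos_word_twist[OF pP, of j], of "M - j"] that by (simp add: twist_twist)
  have "pos_eq n (delta_power n (M - l) @ twist n l P @ Q) (twist n M P @ delta_power n (M - l) @ Q)"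
    using pos_eq_appendR[OF conj[OF M(1)], of Q] by simp
  also have "pos_eq n \<dots> (twist n M P @ delta_power n (M - l') @ Q')"
    using pos_eq_appendL[OF M(3)] .
  also have "pos_eq n \<dots> (delta_power n (M - l') @ twist n l' P @ Q')"
    using pos_eq_appendR[OF pos_eq_sym[OF conj[OF M(2)]], of Q'] by simp
  finally show ?thesis unfolding frac_eq_def using xs M by (intro exI[of _ "M + k"]) simp
qed

lemma word_frac_rel: "(l, r) \<in> sb_rels n \<Longrightarrow> frac_eq n (word_frac n l) (word_frac n r)"
proof -
  assume lr: "(l, r) \<in> sb_rels n"
  consider "(l, r) \<in> pos_rels n"
    | i where "idx_ok n i" "l = [Sig i, SigInv i]" "r = []"
    | i where "idx_ok n i" "l = [SigInv i, Sig i]" "r = []"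
    using lr unfolding sb_rels_def by blast
  then show ?thesis
  proof cases
    case 1
    then have "word_frac n l = (0, l)" "word_frac n r = (0, r)" by (auto simp: word_frac_pos_word pos_rels_def)
    then show ?thesis unfolding frac_eq_def using pos_eq_rel 1 by (intro exI[of _ 0]) simp
  next
    case (2 i)
    then have "word_frac n l = (1, Sig (n - i) # delta_quot n i)"
      by (simp add: twist_def tau_def idx_ok_def, arith)
    then show ?thesis unfolding frac_eq_def using 2 delta_quot_spec[of n i]
      by (intro exI[of _ 1]) (simp add: delta_power_Suc)
  next
    case (3 i)
    then have "word_frac n l = (1, delta_quot n i @ [Sig i])" by simp
    then show ?thesis unfolding frac_eq_def using 3 delta_quot_spec[of n i]
      by (intro exI[of _ 1]) (simp add: delta_power_Suc)
  qed
qed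

lemma word_frac_sb_eq: "sb_eq n U V \<Longrightarrow> sb_word n U \<Longrightarrow> frac_eq n (word_frac n U) (word_frac n V)"
  unfolding sb_eq_def
proof (induction rule: cong_gen.induct)
  case (refl u)
  show ?case by (rule frac_eq_refl)
next
  case (sym u v)
  then show ?case using sb_eq_sb_word[of n u v] frac_eq_sym unfolding sb_eq_def by blast
next
  case (trans u v w)
  then show ?case using sb_eq_sb_word[of n u v] frac_eq_trans unfolding sb_eq_def by blast
next
  case (rel l r a b)
  have words: "sb_word n l" "sb_word n a" "sb_word n b" using rel by auto
  have "frac_eq n (frac_mult n (word_frac n l) (word_frac n b)) (frac_mult n (word_frac n r) (word_frac n b))"
  proof (rule frac_eq_mult_right[OF word_frac_rel[OF rel.hyps]])
    show "pos_word n (snd (word_frac n l))" using pos_word_snd_word_frac words by blast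
    show "pos_word n (snd (word_frac n r))"
      using pos_word_snd_word_frac rel.hyps unfolding sb_rels_def pos_rels_def by auto
  qed
  then have "frac_eq n (frac_mult n (word_frac n a) (frac_mult n (word_frac n l) (word_frac n b)))
      (frac_mult n (word_frac n a) (frac_mult n (word_frac n r) (word_frac n b)))"
    using frac_eq_mult_left pos_word_snd_word_frac words by blast
  then show ?case by (simp add: word_frac_append)
qed

lemma sb_eq_word_inv_delta:
  assumes "pos_word n W"
  shows "sb_eq n (W @ inv_word (delta n)) (inv_word (delta n) @ map (tau n) W)"
proof -
  let ?I = "inv_word (delta n)"
  have "sb_eq n (W @ ?I) ((?I @ delta n) @ W @ ?I)"
    using sb_eq_appendR[OF sb_eq_sym[OF inv_delta_delta[of n]], of "W @ ?I"] by simp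
  also have "sb_eq n \<dots> (?I @ (map (tau n) W @ delta n) @ ?I)"
    using sb_eq_append[OF pos_eq_imp_sb_eq[OF delta_conj[OF assms]], of ?I ?I] by simp
  also have "sb_eq n \<dots> ((?I @ map (tau n) W) @ [])"
    using sb_eq_appendL[OF delta_inv_delta[of n], of "?I @ map (tau n) W"] by simp
  finally show ?thesis by simp
qed

lemma sb_eq_word_inv_delta_power:
  "pos_word n W \<Longrightarrow> sb_eq n (W @ inv_delta_power n k) (inv_delta_power n k @ twist n k W)"
proof (induction k arbitrary: W)
  case (Suc k)
  have "sb_eq n (W @ inv_delta_power n (Suc k)) (inv_word (delta n) @ map (tau n) W @ inv_delta_power n k)"
    using sb_eq_appendR[OF sb_eq_word_inv_delta[OF Suc.prems], of "inv_delta_power n k"]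
    by (simp add: inv_delta_power_Suc)
  also have "sb_eq n \<dots> (inv_word (delta n) @ inv_delta_power n k @ twist n k (map (tau n) W))"
    using sb_eq_appendL[OF Suc.IH[OF pos_word_tau[OF Suc.prems]]] .
  also have "twist n k (map (tau n) W) = twist n (Suc k) W"
    using twist_twist[of n k 1 W] by (simp add: twist_def)
  finally show ?case by (simp add: inv_delta_power_Suc)
qed simp

lemma sb_eq_SigInv: "idx_ok n i \<Longrightarrow> sb_eq n [SigInv i] (inv_word (delta n) @ delta_quot n i)"
proof -
  assume i: "idx_ok n i"
  let ?I = "inv_word (delta n)"
  have "sb_eq n [SigInv i] ((?I @ delta n) @ [SigInv i])"
    using sb_eq_appendR[OF sb_eq_sym[OF inv_delta_delta[of n]], of "[SigInv i]"] by simp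
  also have "sb_eq n \<dots> (?I @ (delta_quot n i @ [Sig i]) @ [SigInv i])"
    using sb_eq_append[OF pos_eq_imp_sb_eq[OF pos_eq_sym], of n "delta_quot n i @ [Sig i]" "delta n" ?I "[SigInv i]"]
      delta_quot_spec[OF i] by simp
  also have "sb_eq n \<dots> ((?I @ delta_quot n i) @ [])"
    using sb_eq_appendL[OF sb_eq_Sig_SigInv[OF i], of "?I @ delta_quot n i"] by simp
  finally show ?thesis by simp
qed

lemma sb_eq_letter_frac:
  "idx_ok n (letter_idx a) \<Longrightarrow> sb_eq n [a] (inv_delta_power n (fst (letter_frac n a)) @ snd (letter_frac n a))"
  by (cases a) (simp_all add: sb_eq_SigInv inv_delta_power_Suc)

lemma sb_eq_word_frac: "sb_word n W \<Longrightarrow> sb_eq n W (inv_delta_power n (fst (word_frac n W)) @ snd (word_frac n W))"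
proof (induction W)
  case (Cons a W)
  obtain k P where kP: "word_frac n W = (k, P)" by (cases "word_frac n W")
  obtain ka Pa where a: "letter_frac n a = (ka, Pa)" by (cases "letter_frac n a")
  have pa: "pos_word n Pa" using pos_word_letter_frac[of n a] Cons.prems a by simp
  have "sb_eq n W (inv_delta_power n k @ P)" using Cons kP by simp
  then have "sb_eq n ([a] @ W) ([a] @ inv_delta_power n k @ P)" by (rule sb_eq_appendL)
  also have "sb_eq n \<dots> ((inv_delta_power n ka @ Pa) @ inv_delta_power n k @ P)"
    using sb_eq_appendR[OF sb_eq_letter_frac[of n a]] Cons.prems a by simp
  also have "sb_eq n \<dots> (inv_delta_power n ka @ (inv_delta_power n k @ twist n k Pa) @ P)"
    using sb_eq_append[OF sb_eq_word_inv_delta_power[OF pa, of k], of "inv_delta_power n ka" P] by simp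
  finally show ?case using kP a by (simp add: inv_delta_power_add)
qed simp

lemma word_frac_inv_delta: "frac_eq n (word_frac n (inv_word (delta n))) (1, [])"
proof -
  obtain k P where kP: "word_frac n (inv_word (delta n)) = (k, P)" by (cases "word_frac n (inv_word (delta n))")
  have "frac_eq n (word_frac n (delta n @ inv_word (delta n))) (word_frac n [])"
    using word_frac_sb_eq[OF delta_inv_delta] pos_word_imp_sb_word[OF pos_word_delta] sb_word_inv_delta by simp
  moreover have "word_frac n (delta n @ inv_word (delta n)) = (k, twist n k (delta n) @ P)"
    using word_frac_append[of n "delta n" "inv_word (delta n)"] word_frac_pos_word[OF pos_word_delta] kP by simp
  ultimately obtain N where N: "k \<le> N" "pos_eq n (delta_power n (N - k) @ twist n k (delta n) @ P) (delta_power n N)"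
    unfolding frac_eq_def by auto
  have "delta_power n (Suc N - k) = delta_power n (N - k) @ delta n"
    using N(1) by (simp add: Suc_diff_le delta_power_Suc')
  then have "pos_eq n (delta_power n (Suc N - k) @ P) (delta_power n (N - k) @ twist n k (delta n) @ P)"
    using pos_eq_appendL[OF pos_eq_appendR[OF pos_eq_sym[OF twist_delta[of n k]]], of "delta_power n (N - k)"] by simp
  also note N(2)
  finally show ?thesis unfolding frac_eq_def using kP N(1) by (intro exI[of _ "Suc N"]) simp
qed

lemma word_frac_inv_delta_power: "pos_word n A \<Longrightarrow> frac_eq n (word_frac n (inv_delta_power n j @ A)) (j, A)"
proof (induction j)
  case 0
  then show ?case by (simp add: word_frac_pos_word frac_eq_refl)
next
  case (Suc j)
  have "frac_eq n (frac_mult n (word_frac n (inv_word (delta n))) (word_frac n (inv_delta_power n j @ A)))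
      (frac_mult n (1, []) (word_frac n (inv_delta_power n j @ A)))"
    using frac_eq_mult_right[OF word_frac_inv_delta] pos_word_snd_word_frac[OF sb_word_inv_delta] by simp
  also have "frac_eq n \<dots> (frac_mult n (1, []) (j, A))"
    using frac_eq_mult_left[OF Suc.IH[OF Suc.prems], of "(1, [])"] by simp
  finally show ?case by (simp add: inv_delta_power_Suc word_frac_append)
qed

lemma word_frac_delta_pow: "pos_word n A \<Longrightarrow> frac_eq n (word_frac n (delta_pow n m @ A)) (nat (- m), delta_power n (nat m) @ A)"
proof (cases "0 \<le> m")
  case True
  assume A: "pos_word n A"
  then have "word_frac n (delta_pow n m @ A) = (0, delta_power n (nat m) @ A)"
    using True pos_word_delta_power by (simp add: delta_pow_nonneg word_frac_pos_word)
  then show ?thesis using True by (simp add: frac_eq_refl)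
next
  case False
  assume A: "pos_word n A"
  then show ?thesis using False word_frac_inv_delta_power[OF A, of "nat (- m)"] by (simp add: delta_pow_neg)
qed

section \<open>The normal form\<close>

lemma frac_eq_delta_pow:
  assumes "frac_eq n (nat (- m), delta_power n (nat m) @ A) (nat (- p), delta_power n (nat p) @ C)"
  obtains s t where "int s - int t = m - p" "pos_eq n (delta_power n s @ A) (delta_power n t @ C)"
proof -
  obtain N where N: "nat (- m) \<le> N" "nat (- p) \<le> N"
    "pos_eq n (delta_power n (N - nat (- m)) @ delta_power n (nat m) @ A)
       (delta_power n (N - nat (- p)) @ delta_power n (nat p) @ C)"
    using assms unfolding frac_eq_def by auto
  have "int (N - nat (- m) + nat m) - int (N - nat (- p) + nat p) = m - p" using N(1,2) by linarith
  moreover have "pos_eq n (delta_power n (N - nat (- m) + nat m) @ A) (delta_power n (N - nat (- p) + nat p) @ C)"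
    using N(3) by (simp add: delta_power_add)
  ultimately show ?thesis by (rule that)
qed

lemma delta_power_prime_cancel_le:
  assumes "pos_word n A" "pos_word n C" "prime_to_delta n A" "s \<le> t"
    and eq: "pos_eq n (delta_power n s @ A) (delta_power n t @ C)"
  shows "s = t \<and> pos_eq n A C"
proof -
  have "pos_eq n (delta_power n s @ A) (delta_power n s @ delta_power n (t - s) @ C)"
    using eq assms(4) delta_power_add[of n s "t - s"] by simp
  then have AC: "pos_eq n A (delta_power n (t - s) @ C)"
    by (rule pos_eq_left_cancel[rotated]) (simp add: assms(1) pos_word_delta_power)
  show ?thesis
  proof (cases "t - s")
    case 0
    then show ?thesis using AC assms(4) by simp
  next
    case (Suc j)
    then have "pos_eq n A (delta n @ delta_power n j @ C)" using AC by (simp add: delta_power_Suc)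
    then show ?thesis
      using assms(2,3) pos_word_delta_power unfolding prime_to_delta_def by auto
  qed
qed

lemma delta_power_prime_cancel:
  assumes "pos_word n A" "pos_word n C" "prime_to_delta n A" "prime_to_delta n C"
    and "pos_eq n (delta_power n s @ A) (delta_power n t @ C)"
  shows "s = t \<and> pos_eq n A C"
proof (cases "s \<le> t")
  case True
  then show ?thesis using delta_power_prime_cancel_le assms by blast
next
  case False
  then show ?thesis
    using delta_power_prime_cancel_le[OF assms(2,1,4) _ pos_eq_sym[OF assms(5)]] pos_eq_sym by auto
qed

lemma own_base_unique:
  assumes "own_base n A" "own_base n C" "pos_word n A" "pos_word n C" "pos_eq n A C"
  shows "A = C"
proof (rule ccontr)
  assume "A \<noteq> C"
  then have "word_less n A C" "word_less n C A"
    using assms pos_eq_sym[OF assms(5)] unfolding own_base_def by blast+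
  then have "(map (rank n) A, map (rank n) A) \<in> lexord {(a, b). a < b}"
    unfolding word_less_def by (rule lexord_trans) (auto simp: trans_def)
  then show False using lexord_irreflexive[of "{(a, b). (a::nat) < b}"] by auto
qed

theorem normal_form_unique:
  assumes A: "pos_word n A" "prime_to_delta n A" "own_base n A"
    and C: "pos_word n C" "prime_to_delta n C" "own_base n C"
    and eq: "sb_eq n (delta_pow n m @ A) (delta_pow n p @ C)"
  shows "m = p \<and> A = C"
proof -
  have "sb_word n (delta_pow n m @ A)"
    using A(1) pos_word_delta_power sb_word_inv_delta_power
    by (cases "0 \<le> m") (simp_all add: delta_pow_nonneg delta_pow_neg pos_word_imp_sb_word)
  then have "frac_eq n (word_frac n (delta_pow n m @ A)) (word_frac n (delta_pow n p @ C))"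
    using word_frac_sb_eq[OF eq] by blast
  then have "frac_eq n (nat (- m), delta_power n (nat m) @ A) (nat (- p), delta_power n (nat p) @ C)"
    using word_frac_delta_pow[OF A(1)] word_frac_delta_pow[OF C(1)] frac_eq_sym frac_eq_trans by metis
  then obtain s t where "int s - int t = m - p" "pos_eq n (delta_power n s @ A) (delta_power n t @ C)"
    by (rule frac_eq_delta_pow)
  then show ?thesis using delta_power_prime_cancel[OF A(1) C(1) A(2) C(2)] own_base_unique A C by fastforce
qed

lemma delta_nonempty: "2 \<le> n \<Longrightarrow> delta n \<noteq> []"
  by (cases "n - 1") (simp_all add: delta_half_twist sig_up_def)

lemma delta_power_prime_decomp:
  "2 \<le> n \<Longrightarrow> pos_word n P \<Longrightarrow> \<exists>j A. pos_word n A \<and> prime_to_delta n A \<and> pos_eq n P (delta_power n j @ A)"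
proof (induction "length P" arbitrary: P rule: less_induct)
  case less
  show ?case
  proof (cases "prime_to_delta n P")
    case True
    then show ?thesis using less.prems by (intro exI[of _ 0] exI[of _ P]) simp
  next
    case False
    then obtain Z where Z: "pos_word n Z" "pos_eq n P (delta n @ Z)" unfolding prime_to_delta_def by blast
    have "length Z < length P" using pos_eq_length[OF Z(2)] delta_nonempty[OF less.prems(1)] by simp
    then obtain j A where A: "pos_word n A" "prime_to_delta n A" "pos_eq n Z (delta_power n j @ A)"
      using less Z(1) by blast
    have "pos_eq n P (delta_power n (Suc j) @ A)"
      using pos_eq_trans[OF Z(2) pos_eq_appendL[OF A(3), of "delta n"]] by (simp add: delta_power_Suc)
    then show ?thesis using A by blast
  qed
qed

lemma inj_on_rank: "inj_on (rank n) {a. is_pos_letter a \<and> idx_ok n (letter_idx a)}"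
proof (rule inj_onI)
  fix a b assume "a \<in> {a. is_pos_letter a \<and> idx_ok n (letter_idx a)}"
    "b \<in> {a. is_pos_letter a \<and> idx_ok n (letter_idx a)}" "rank n a = rank n b"
  then show "a = b" by (cases a; cases b) (auto simp: idx_ok_def)
qed

text \<open>Positively equal words have the same length, so there are only finitely many candidates.\<close>
lemma own_base_exists: "pos_word n A \<Longrightarrow> \<exists>B. pos_word n B \<and> pos_eq n A B \<and> own_base n B"
proof -
  assume A: "pos_word n A"
  define S where "S = {B. pos_word n B \<and> pos_eq n A B}"
  have rank_bound: "rank n a \<le> 2 * n" if "a \<in> set B" "B \<in> S" for a B
  proof -
    have "is_pos_letter a \<and> idx_ok n (letter_idx a)" using that unfolding S_def pos_word_def by blast
    then show ?thesis by (cases a) (auto simp: idx_ok_def)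
  qed
  have "map (rank n) ` S \<subseteq> {xs. set xs \<subseteq> {0..2 * n} \<and> length xs = length A}"
    using rank_bound pos_eq_length unfolding S_def by fastforce
  then have fin: "finite (map (rank n) ` S)" using finite_subset finite_lists_length_eq by blast
  have ne: "map (rank n) ` S \<noteq> {}" using A unfolding S_def by auto
  obtain B where B: "B \<in> S" "map (rank n) B = Min (map (rank n) ` S)" using Min_in[OF fin ne] by auto
  have pB: "pos_word n B" "pos_eq n A B" using B(1) unfolding S_def by auto
  have "own_base n B" unfolding own_base_def
  proof (intro allI impI)
    fix B' assume B': "pos_word n B' \<and> pos_eq n B B'"
    then have "B' \<in> S" using pB pos_eq_trans unfolding S_def by blast
    then have le: "map (rank n) B \<le> map (rank n) B'" using B(2) Min_le[OF fin] by auto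
    have "set B \<union> set B' \<subseteq> {a. is_pos_letter a \<and> idx_ok n (letter_idx a)}"
      using pB(1) B' unfolding pos_word_def by blast
    then have inj: "inj_on (rank n) (set B \<union> set B')" using inj_on_rank inj_on_subset by blast
    show "B = B' \<or> word_less n B B'"
    proof (cases "map (rank n) B = map (rank n) B'")
      case True
      then show ?thesis using inj inj_on_map_eq_map by blast
    next
      case False
      then have "map (rank n) B < map (rank n) B'" using le by simp
      then show ?thesis unfolding word_less_def list_less_def by blast
    qed
  qed
  then show ?thesis using pB by blast
qed

theorem normal_form_exists:
  assumes "2 \<le> n" "sb_word n W"
  shows "\<exists>m A. pos_word n A \<and> prime_to_delta n A \<and> own_base n A \<and> sb_eq n W (delta_pow n m @ A)"
proof -
  obtain k P where P: "pos_word n P" "sb_eq n W (inv_delta_power n k @ P)"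
    using sb_eq_word_frac[OF assms(2)] pos_word_snd_word_frac[OF assms(2)] by blast
  obtain j A where A: "pos_word n A" "prime_to_delta n A" "pos_eq n P (delta_power n j @ A)"
    using delta_power_prime_decomp[OF assms(1) P(1)] by blast
  obtain B where B: "pos_word n B" "pos_eq n A B" "own_base n B" using own_base_exists[OF A(1)] by blast
  have "prime_to_delta n B" using A(2) B(2) pos_eq_trans pos_eq_sym unfolding prime_to_delta_def by blast
  moreover have "sb_eq n W (inv_delta_power n k @ delta_power n j @ B)"
    using P(2) sb_eq_appendL[OF pos_eq_imp_sb_eq[OF pos_eq_trans[OF A(3) pos_eq_appendL[OF B(2)]]]]
    by (rule sb_eq_trans)
  moreover have "sb_eq n (inv_delta_power n k @ delta_power n j @ B) (delta_pow n (int j - int k) @ B)"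
    using sb_eq_appendR[OF inv_delta_power_delta_power, of n k j B] by simp
  ultimately show ?thesis using B by (meson sb_eq_trans)
qed

theorem theorem2p1:
  fixes n :: nat
  assumes "2 \<le> n"
  shows "(\<forall>W. sb_word n W \<longrightarrow>
            (\<exists>(m::int) A. pos_word n A \<and> prime_to_delta n A \<and> own_base n A
                   \<and> sb_eq n W (delta_pow n m @ A)))
       \<and> (\<forall>(m::int) (p::int) A C.
            pos_word n A \<and> prime_to_delta n A \<and> own_base n A \<and>
            pos_word n C \<and> prime_to_delta n C \<and> own_base n C \<and>
            sb_eq n (delta_pow n m @ A) (delta_pow n p @ C)
            \<longrightarrow> m = p \<and> A = C)"
  using normal_form_exists[OF assms] normal_form_unique by blast

end
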